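(* Let $d\ge1$ and let $x_1,\dots,x_d,y_1,\dots,y_{d+1}$ be real numbers such that the $(d+1)\times(d+1)$ matrix whose $k$-th column $\mathbf{v}_k$ ($1\le k\le d$) has entry $x_k$ in row $k$, entry $y_k$ in row $d+1$ and zeros elsewhere, and whose last column is $\mathbf{v}_{d+1}=(0,\dots,0,y_{d+1})^T$, is nonsingular. Put $K_0=1$ and $K_j=1+\sum_{i=1}^j(y_i/x_i)^2$ for $1\le j\le d$. Let $\mathbf{v}_1^\star,\dots,\mathbf{v}_{d+1}^\star$ be the Gram–Schmidt orthogonalization of $(\mathbf{v}_1,\dots,\mathbf{v}_{d+1})$. Then for $1\le k\le d$ and $1\le i\le d+1$, $$(\mathbf{v}_k^\star)_i=\begin{cases}-\dfrac{y_k}{K_{k-1}}\cdot\dfrac{y_i}{x_i} & i<k,\\ x_k & i=k,\\ 0 & k<i<d+1,\\ \dfrac{y_k}{K_{k-1}} & i=d+1,\end{cases}$$ and $(\mathbf{v}_{d+1}^\star)_i=-\dfrac{y_{d+1}}{K_d}\cdot\dfrac{y_i}{x_i}$ for $i\le d$, $(\mathbf{v}_{d+1}^\star)_{d+1}=\dfrac{y_{d+1}}{K_d}$. Moreover $$\|\mathbf{v}_k^\star\|_2^2=x_k^2\frac{K_k}{K_{k-1}}\ (1\le k\le d),\qquad \|\mathbf{v}_{d+1}^\star\|_2^2=\frac{y_{d+1}^2}{K_d},$$ and the Gram–Schmidt coefficients are $$\mu_{k,j}=\frac{\mathbf{v}_k\cdot\mathbf{v}_j^\star}{\mathbf{v}_j^\star\cdot\mathbf{v}_j^\star}=\frac{y_ky_j}{x_j^2K_j},\qquad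 1\le j<k\le d+1.$$
   Context: $(\mathbf{v})_i$ denotes the $i$-th coordinate, $\|\cdot\|_2$ the Euclidean norm. Gram–Schmidt orthogonalization: $\mathbf{v}_k^\star=\mathbf{v}_k-\sum_{j<k}\mu_{k,j}\mathbf{v}_j^\star$ with $\mu_{k,j}=\frac{\mathbf{v}_k\cdot\mathbf{v}_j^\star}{\mathbf{v}_j^\star\cdot\mathbf{v}_j^\star}$. *)

theory Defs
  imports Complex_Main "Jordan_Normal_Form.Determinant"
begin

text \<open>Vectors of R^(d+1) are represented as functions nat => real, coordinates indexed 1..n.\<close>

definition dotp :: "nat \<Rightarrow> (nat \<Rightarrow> real) \<Rightarrow> (nat \<Rightarrow> real) \<Rightarrow> real" where
  "dotp n u w = (\<Sum>i=1..n. u i * w i)"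

function gso :: "nat \<Rightarrow> (nat \<Rightarrow> nat \<Rightarrow> real) \<Rightarrow> nat \<Rightarrow> (nat \<Rightarrow> real)" where
  "gso n v k = (\<lambda>i. v k i - (\<Sum>j\<in>{1..<k}.
       (dotp n (v k) (gso n v j) / dotp n (gso n v j) (gso n v j)) * gso n v j i))"
  by pat_completeness auto
termination
  by (relation "measure (\<lambda>(n, v, k). k)") auto

definition gs_mu :: "nat \<Rightarrow> (nat \<Rightarrow> nat \<Rightarrow> real) \<Rightarrow> nat \<Rightarrow> nat \<Rightarrow> real" where
  "gs_mu n v k j = dotp n (v k) (gso n v j) / dotp n (gso n v j) (gso n v j)"

definition col :: "nat \<Rightarrow> (nat \<Rightarrow> real) \<Rightarrow> (nat \<Rightarrow> real) \<Rightarrow> nat \<Rightarrow> nat \<Rightarrow> real" where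
  "col d x y k i =
     (if k \<le> d then (if i = k then x k else if i = d + 1 then y k else 0)
      else (if i = d + 1 then y (d + 1) else 0))"

text \<open>The (d+1)x(d+1) matrix with columns v_1..v_{d+1} (Jordan_Normal_Form matrices are 0-indexed).\<close>
definition colmat :: "nat \<Rightarrow> (nat \<Rightarrow> real) \<Rightarrow> (nat \<Rightarrow> real) \<Rightarrow> real mat" where
  "colmat d x y = mat (d + 1) (d + 1) (\<lambda>(r, c). col d x y (c + 1) (r + 1))"

definition Kc :: "(nat \<Rightarrow> real) \<Rightarrow> (nat \<Rightarrow> real) \<Rightarrow> nat \<Rightarrow> real" where
  "Kc x y j = 1 + (\<Sum>i=1..j. (y i / x i)^2)"

end

theory Submission imports Defs begin

text \<open>The matrix is lower triangular with diagonal x_1, ..., x_d, y_(d+1), so nonsingularity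
  forces every x_k to be nonzero. One then checks by strong induction on k that the claimed
  vectors satisfy the Gram--Schmidt recursion. The last coordinate of v_j* is
  c_j = y_j / K_(j-1), and the identity K_j = K_(j-1) + (y_j / x_j)^2 gives
  mu_(k,j) c_j = y_k (1 / K_(j-1) - 1 / K_j); hence every coordinate of
  v_k - sum_(j<k) mu_(k,j) v_j* is a telescoping sum.\<close>

lemma det_colmat_nonzero_imp_x_nonzero:
  assumes "det (colmat d x y) \<noteq> 0" "k \<in> {1..d}"
  shows "x k \<noteq> 0"
proof
  assume "x k = 0"
  have "colmat d x y $$ (k - 1, k - 1) \<in> set (diag_mat (colmat d x y))"
    unfolding diag_mat_def set_map
    by (rule imageI) (use assms(2) in \<open>auto simp: colmat_def\<close>)
  moreover have "colmat d x y $$ (k - 1, k - 1) = 0"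
    using assms(2) \<open>x k = 0\<close> by (auto simp: colmat_def col_def)
  moreover have "det (colmat d x y) = prod_list (diag_mat (colmat d x y))"
    by (rule det_lower_triangular[of "d + 1"]) (auto simp: colmat_def col_def)
  ultimately show False
    using assms(1) by (simp add: prod_list_zero_iff)
qed

lemma Kc_0 [simp]: "Kc x y 0 = 1"
  by (simp add: Kc_def)

lemma Kc_Suc: "Kc x y (Suc j) = Kc x y j + (y (Suc j) / x (Suc j))\<^sup>2"
  by (simp add: Kc_def)

lemma Kc_pos: "Kc x y j > 0"
  unfolding Kc_def by (simp add: add_pos_nonneg sum_nonneg)

lemma inverse_Kc_diff:
  assumes "x (Suc j) \<noteq> 0"
  shows "(y (Suc j))\<^sup>2 / ((x (Suc j))\<^sup>2 * Kc x y (Suc j) * Kc x y j)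
           = 1 / Kc x y j - 1 / Kc x y (Suc j)"
proof -
  have "(y (Suc j))\<^sup>2 = (x (Suc j))\<^sup>2 * (Kc x y (Suc j) - Kc x y j)"
    using assms by (simp add: Kc_Suc power_divide)
  then show ?thesis
    using assms Kc_pos[of x y j] Kc_pos[of x y "Suc j"] by (simp add: field_simps)
qed

definition gs_coeff :: "(nat \<Rightarrow> real) \<Rightarrow> (nat \<Rightarrow> real) \<Rightarrow> nat \<Rightarrow> nat \<Rightarrow> real" where
  "gs_coeff x y k j = y k * y j / ((x j)\<^sup>2 * Kc x y j)"

lemma sum_gs_coeff_telescope:
  assumes "\<forall>j\<in>{Suc a..b}. x j \<noteq> 0" "a \<le> b"
  shows "(\<Sum>j=Suc a..b. gs_coeff x y k j * (y j / Kc x y (j - 1)))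
           = y k * (1 / Kc x y a - 1 / Kc x y b)"
  using assms
proof (induction b)
  case (Suc b)
  show ?case
  proof (cases "a = Suc b")
    case False
    then have "a \<le> b" using Suc.prems by simp
    have "x (Suc b) \<noteq> 0" using Suc.prems False by auto
    have "gs_coeff x y k (Suc b) * (y (Suc b) / Kc x y b)
            = y k * ((y (Suc b))\<^sup>2 / ((x (Suc b))\<^sup>2 * Kc x y (Suc b) * Kc x y b))"
      by (simp add: gs_coeff_def power2_eq_square)
    also have "\<dots> = y k * (1 / Kc x y b - 1 / Kc x y (Suc b))"
      using inverse_Kc_diff[of x b y, OF \<open>x (Suc b) \<noteq> 0\<close>] by simp
    finally show ?thesis
      using Suc.IH \<open>a \<le> b\<close> Suc.prems by (simp add: right_diff_distrib)
  qed simp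
qed simp

text \<open>The claimed vectors v_k* for all k = 1, ..., d+1 at once: for k = d+1 the diagonal
  branch is never reached on coordinates 1, ..., d+1.\<close>

definition gs_closed :: "nat \<Rightarrow> (nat \<Rightarrow> real) \<Rightarrow> (nat \<Rightarrow> real) \<Rightarrow> nat \<Rightarrow> nat \<Rightarrow> real" where
  "gs_closed d x y k i =
     (if i = d + 1 then y k / Kc x y (k - 1)
      else if i < k then - (y k / Kc x y (k - 1)) * (y i / x i)
      else if i = k then x k
      else 0)"

lemma dotp_Suc: "dotp (Suc n) u w = dotp n u w + u (Suc n) * w (Suc n)"
  by (simp add: dotp_def)

lemma dotp_cong:
  "(\<And>i. i \<in> {1..n} \<Longrightarrow> u i = u' i) \<Longrightarrow> (\<And>i. i \<in> {1..n} \<Longrightarrow> w i = w' i)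
    \<Longrightarrow> dotp n u w = dotp n u' w'"
  unfolding dotp_def by (rule sum.cong) simp_all

lemma dotp_col_gs_closed:
  assumes "1 \<le> j" "j < k" "k \<le> d + 1"
  shows "dotp (d + 1) (col d x y k) (gs_closed d x y j) = y k * y j / Kc x y (j - 1)"
proof -
  have "dotp d (col d x y k) (gs_closed d x y j) = 0"
    unfolding dotp_def by (rule sum.neutral) (use assms in \<open>auto simp: col_def gs_closed_def\<close>)
  moreover have "col d x y k (d + 1) = y k"
    using assms by (cases "k = d + 1") (auto simp: col_def)
  ultimately show ?thesis
    by (simp add: dotp_Suc gs_closed_def)
qed

lemma dotp_gs_closed_self:
  assumes "1 \<le> k" "k \<le> d + 1"
  shows "dotp (d + 1) (gs_closed d x y k) (gs_closed d x y k)
           = (if k \<le> d then (x k)\<^sup>2 else 0) + (y k)\<^sup>2 / Kc x y (k - 1)"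
proof -
  define c where "c = y k / Kc x y (k - 1)"
  have split: "{1..d} = {1..k - 1} \<union> {k..d}" "{1..k - 1} \<inter> {k..d} = {}"
    using assms by auto
  have "dotp d (gs_closed d x y k) (gs_closed d x y k)
          = (\<Sum>i=1..k - 1. c\<^sup>2 * (y i / x i)\<^sup>2) + (\<Sum>i=k..d. (if i = k then (x k)\<^sup>2 else 0))"
    unfolding dotp_def split(1) sum.union_disjoint[OF finite_atLeastAtMost finite_atLeastAtMost split(2)]
    by (intro arg_cong2[where f = "(+)"] sum.cong)
       (use assms in \<open>auto simp: gs_closed_def c_def power2_eq_square mult_ac\<close>)
  also have "\<dots> = c\<^sup>2 * (Kc x y (k - 1) - 1) + (if k \<le> d then (x k)\<^sup>2 else 0)"
    by (simp add: Kc_def sum_distrib_left[symmetric])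
  moreover have "dotp (d + 1) (gs_closed d x y k) (gs_closed d x y k)
                   = dotp d (gs_closed d x y k) (gs_closed d x y k) + c\<^sup>2"
    by (simp add: dotp_Suc gs_closed_def c_def power2_eq_square)
  moreover have "c\<^sup>2 * Kc x y (k - 1) = (y k)\<^sup>2 / Kc x y (k - 1)"
    using Kc_pos[of x y "k - 1"] by (simp add: c_def power_divide power2_eq_square)
  ultimately show ?thesis
    by (simp add: algebra_simps)
qed

lemma dotp_gs_closed_self_le:
  assumes "1 \<le> k" "k \<le> d" "x k \<noteq> 0"
  shows "dotp (d + 1) (gs_closed d x y k) (gs_closed d x y k) = (x k)\<^sup>2 * (Kc x y k / Kc x y (k - 1))"
proof -
  have "Kc x y k = Kc x y (k - 1) + (y k / x k)\<^sup>2"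
    using Kc_Suc[of x y "k - 1"] assms(1) by simp
  then show ?thesis
    using dotp_gs_closed_self[of k d x y] assms Kc_pos[of x y "k - 1"]
    by (simp add: power_divide field_simps)
qed

lemma dotp_gs_closed_self_last:
  "dotp (d + 1) (gs_closed d x y (d + 1)) (gs_closed d x y (d + 1)) = (y (d + 1))\<^sup>2 / Kc x y d"
  using dotp_gs_closed_self[of "d + 1" d x y] by simp

lemma gs_coeff_eq:
  assumes "1 \<le> j" "j < k" "k \<le> d + 1" "x j \<noteq> 0"
  shows "dotp (d + 1) (col d x y k) (gs_closed d x y j)
           / dotp (d + 1) (gs_closed d x y j) (gs_closed d x y j) = gs_coeff x y k j"
proof -
  have "Kc x y j = Kc x y (j - 1) + (y j / x j)\<^sup>2"
    using Kc_Suc[of x y "j - 1"] assms(1) by simp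
  then show ?thesis
    using dotp_col_gs_closed[OF assms(1-3)] dotp_gs_closed_self_le[of j d x y] assms
      Kc_pos[of x y j] Kc_pos[of x y "j - 1"]
    by (simp add: gs_coeff_def power_divide field_simps)
qed

lemma sum_gs_coeff_gs_closed_last:
  assumes "\<forall>j\<in>{1..d}. x j \<noteq> 0" "1 \<le> k" "k \<le> d + 1"
  shows "(\<Sum>j\<in>{1..<k}. gs_coeff x y k j * gs_closed d x y j (d + 1))
           = y k * (1 - 1 / Kc x y (k - 1))"
proof -
  have "{1..<k} = {Suc 0..k - 1}" "\<forall>j\<in>{Suc 0..k - 1}. x j \<noteq> 0"
    using assms by auto
  then show ?thesis
    using sum_gs_coeff_telescope[of 0 "k - 1" x y k] by (simp add: gs_closed_def)
qed

lemma sum_gs_coeff_gs_closed_interior: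
  assumes "\<forall>j\<in>{1..d}. x j \<noteq> 0" "1 \<le> i" "i < k" "k \<le> d + 1"
  shows "(\<Sum>j\<in>{1..<k}. gs_coeff x y k j * gs_closed d x y j i)
           = y k * y i / (x i * Kc x y (k - 1))"
proof -
  let ?f = "\<lambda>j. gs_coeff x y k j * gs_closed d x y j i"
  have xi: "x i \<noteq> 0"
    using assms by auto
  have "{1..<k} = {1..<i} \<union> {i..k - 1}" "{1..<i} \<inter> {i..k - 1} = {}"
    using assms by auto
  then have "sum ?f {1..<k} = sum ?f {1..<i} + (?f i + sum ?f {Suc i..k - 1})"
    using assms by (simp add: sum.union_disjoint sum.atLeast_Suc_atMost)
  also have "sum ?f {1..<i} = 0"
    by (rule sum.neutral) (use assms in \<open>auto simp: gs_closed_def\<close>)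
  also have "sum ?f {Suc i..k - 1}
               = - (y i / x i) * (\<Sum>j=Suc i..k - 1. gs_coeff x y k j * (y j / Kc x y (j - 1)))"
    unfolding sum_distrib_left
    by (rule sum.cong) (use assms in \<open>auto simp: gs_closed_def mult_ac\<close>)
  also have "\<dots> = - (y i / x i) * (y k * (1 / Kc x y i - 1 / Kc x y (k - 1)))"
  proof -
    have "\<forall>j\<in>{Suc i..k - 1}. x j \<noteq> 0" "i \<le> k - 1"
      using assms by auto
    then show ?thesis
      using sum_gs_coeff_telescope[of i "k - 1" x y k] by simp
  qed
  finally show ?thesis
    using assms xi Kc_pos[of x y i] Kc_pos[of x y "k - 1"]
    by (simp add: gs_closed_def gs_coeff_def power2_eq_square field_simps)
qed

lemma col_minus_sum_gs_closed:
  assumes "\<forall>j\<in>{1..d}. x j \<noteq> 0" "1 \<le> k" "k \<le> d + 1" "i \<in> {1..d + 1}"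
  shows "col d x y k i - (\<Sum>j\<in>{1..<k}. gs_coeff x y k j * gs_closed d x y j i)
           = gs_closed d x y k i"
proof -
  consider "i = d + 1" | "i \<le> d" "i < k" | "i \<le> d" "k \<le> i"
    using assms(4) by fastforce
  then show ?thesis
  proof cases
    case 1
    then show ?thesis
      using sum_gs_coeff_gs_closed_last[OF assms(1-3)] Kc_pos[of x y "k - 1"] assms
      by (cases "k = d + 1") (auto simp: col_def gs_closed_def field_simps)
  next
    case 2
    then show ?thesis
      using sum_gs_coeff_gs_closed_interior[OF assms(1) _ \<open>i < k\<close> assms(3)] assms
      by (auto simp: col_def gs_closed_def)
  next
    case 3
    have "(\<Sum>j\<in>{1..<k}. gs_coeff x y k j * gs_closed d x y j i) = 0"
      by (rule sum.neutral) (use 3 in \<open>auto simp: gs_closed_def\<close>)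
    then show ?thesis
      using 3 assms by (auto simp: col_def gs_closed_def)
  qed
qed

declare gso.simps [simp del]

lemma gso_col_eq_gs_closed:
  assumes "\<forall>j\<in>{1..d}. x j \<noteq> 0" "1 \<le> k" "k \<le> d + 1" "i \<in> {1..d + 1}"
  shows "gso (d + 1) (col d x y) k i = gs_closed d x y k i"
  using assms(2-4)
proof (induction k arbitrary: i rule: less_induct)
  case (less k)
  let ?w = "gso (d + 1) (col d x y)"
  have IH: "?w j i' = gs_closed d x y j i'" if "j \<in> {1..<k}" "i' \<in> {1..d + 1}" for j i'
    using less.IH[of j i'] less.prems that by auto
  have coeff: "dotp (d + 1) (col d x y k) (?w j) / dotp (d + 1) (?w j) (?w j) = gs_coeff x y k j"
    if j: "j \<in> {1..<k}" for j
  proof -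
    have "dotp (d + 1) (col d x y k) (?w j) / dotp (d + 1) (?w j) (?w j)
            = dotp (d + 1) (col d x y k) (gs_closed d x y j)
              / dotp (d + 1) (gs_closed d x y j) (gs_closed d x y j)"
      using IH[OF j] by (intro arg_cong2[where f = "(/)"] dotp_cong) auto
    also have "\<dots> = gs_coeff x y k j"
      using j less.prems assms(1) by (intro gs_coeff_eq) auto
    finally show ?thesis .
  qed
  have "?w k i = col d x y k i - (\<Sum>j\<in>{1..<k}.
          dotp (d + 1) (col d x y k) (?w j) / dotp (d + 1) (?w j) (?w j) * ?w j i)"
    by (rule gso.simps[THEN fun_cong])
  also have "\<dots> = col d x y k i - (\<Sum>j\<in>{1..<k}. gs_coeff x y k j * gs_closed d x y j i)"
    using coeff IH less.prems by (intro arg_cong2[where f = "(-)"] sum.cong) auto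
  also have "\<dots> = gs_closed d x y k i"
    using col_minus_sum_gs_closed assms(1) less.prems by blast
  finally show ?case .
qed

theorem lemma4:
  fixes d :: nat and x y :: "nat \<Rightarrow> real"
  assumes "d \<ge> 1"
    and "det (colmat d x y) \<noteq> 0"
  shows "(\<forall>k\<in>{1..d}. \<forall>i\<in>{1..d+1}.
            gso (d+1) (col d x y) k i =
              (if i < k then - (y k / Kc x y (k - 1)) * (y i / x i)
               else if i = k then x k
               else if i < d + 1 then 0
               else y k / Kc x y (k - 1)))
       \<and> (\<forall>i\<in>{1..d}. gso (d+1) (col d x y) (d+1) i = - (y (d+1) / Kc x y d) * (y i / x i))
       \<and> gso (d+1) (col d x y) (d+1) (d+1) = y (d+1) / Kc x y d
       \<and> (\<forall>k\<in>{1..d}. dotp (d+1) (gso (d+1) (col d x y) k) (gso (d+1) (col d x y) k)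
                        = (x k)^2 * (Kc x y k / Kc x y (k - 1)))
       \<and> dotp (d+1) (gso (d+1) (col d x y) (d+1)) (gso (d+1) (col d x y) (d+1))
            = (y (d+1))^2 / Kc x y d
       \<and> (\<forall>k\<in>{1..d+1}. \<forall>j\<in>{1..<k}.
            gs_mu (d+1) (col d x y) k j = y k * y j / ((x j)^2 * Kc x y j))"
proof -
  let ?w = "gso (d + 1) (col d x y)"
  have nonzero: "\<forall>j\<in>{1..d}. x j \<noteq> 0"
    using det_colmat_nonzero_imp_x_nonzero[OF assms(2)] by blast
  note closed = gso_col_eq_gs_closed[OF nonzero]
  have norm: "dotp (d + 1) (?w k) (?w k) = dotp (d + 1) (gs_closed d x y k) (gs_closed d x y k)"
    if "k \<in> {1..d + 1}" for k
    using closed that by (intro dotp_cong) auto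
  have mu: "gs_mu (d + 1) (col d x y) k j = gs_coeff x y k j"
    if "k \<in> {1..d + 1}" "j \<in> {1..<k}" for k j
  proof -
    have "dotp (d + 1) (col d x y k) (?w j) = dotp (d + 1) (col d x y k) (gs_closed d x y j)"
      using closed that by (intro dotp_cong) auto
    then show ?thesis
      using that norm[of j] nonzero gs_coeff_eq[of j k d x y] by (simp add: gs_mu_def)
  qed
  have coords_le: "?w k i = (if i < k then - (y k / Kc x y (k - 1)) * (y i / x i)
                             else if i = k then x k else if i < d + 1 then 0
                             else y k / Kc x y (k - 1))"
    if "k \<in> {1..d}" "i \<in> {1..d + 1}" for k i
    using closed[of k i] that by (auto simp: gs_closed_def)
  have coords_last: "?w (d + 1) i = (if i \<le> d then - (y (d + 1) / Kc x y d) * (y i / x i)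
                                     else y (d + 1) / Kc x y d)"
    if "i \<in> {1..d + 1}" for i
    using closed[of "d + 1" i] that by (auto simp: gs_closed_def)
  show ?thesis
    using coords_le coords_last norm mu nonzero dotp_gs_closed_self_le dotp_gs_closed_self_last
    by (simp add: gs_coeff_def)
qed

end
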